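(* Assume $\lambda_{\max}(L_1)>\lambda_{\max}(L_2)$, that $\lambda_N^1:=\lambda_{\max}(L_1)$ is a simple eigenvalue of $L_1$ with eigenvector $v_N^1$, and that the nodal set $\{x: v_N^1(x)=0\}$ is non-empty. Let $c_1^*>0$ be the largest budget such that for $0\le c<c_1^*$ the optimal largest eigenvalue $\lambda_n^*(c)$ is simple. Then for every budget $c<c_1^*$, the optimal solution of the embedding problem $$\max_{v_i\in\mathbb{R}^n,\ \xi\in\mathbb{R}}\ c\xi+\sum_{\{i,j\}\in E_1\cup E_2}\|v_i-v_j\|^2\quad\text{s.t.}\quad \|v_i-v_j\|^2\ge\xi\ \ \forall\{i,j\}\in E_3,\ \ \sum_{i\in V}\|v_i\|^2=1$$ is one-dimensional and, up to a rotation, is given by $v_i^*=\gamma\, v_N^1(i)\,e_1$ for $i\in V_1$ and $v_i^*=0$ for $i\in V_2$, where $\gamma$ is a constant and $e_1\in\mathbb{R}^n$ is the first standard basis vector.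
   Context: A multiplex network consists of two layers $G_1=(V_1,E_1)$ and $G_2=(V_2,E_2)$, simple undirected graphs with $N$ vertices each and Laplacians $L_1,L_2$; vertices of $G_1$ are numbered $1,\dots,N$, those of $G_2$ are numbered $N+1,\dots,2N$, $n=2N$, $V=V_1\cup V_2$. Interlayer edges form the perfect matching $E_3=\{\{i,N+i\}:i=1,\dots,N\}$ with weights $w_i\ge0$; with $W=\operatorname{diag}(w)$ the multiplex Laplacian is $L(w)=\begin{bmatrix}L_1+W&-W\\-W&L_2+W\end{bmatrix}$. For $c\ge0$, $\lambda_n^*(c)=\min\{\lambda_{\max}(L(w)):w\ge0,\ \sum_i w_i=c\}$. The embedding problem above is the (Gram-representation) dual of this minimization. *)

theory Defs
  imports "HOL-Analysis.Analysis"
begin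

text \<open>Vertices of each layer form a finite type 'n with CARD('n) = N.
  The multiplex vertex set is 'n + 'n: Inl i is vertex i of G1, Inr i is vertex N+i of G2.\<close>

definition simple_graph :: "('n \<Rightarrow> 'n \<Rightarrow> bool) \<Rightarrow> bool" where
  "simple_graph E \<longleftrightarrow> (\<forall>i j. E i j \<longrightarrow> E j i) \<and> (\<forall>i. \<not> E i i)"

definition degree :: "('n::finite \<Rightarrow> 'n \<Rightarrow> bool) \<Rightarrow> 'n \<Rightarrow> nat" where
  "degree E i = card {j. E i j}"

definition laplacian :: "('n::finite \<Rightarrow> 'n \<Rightarrow> bool) \<Rightarrow> real^'n^'n" where
  "laplacian E = (\<chi> i j. if i = j then real (degree E i) else if E i j then -1 else 0)"

definition multiplex_laplacian ::
  "('n::finite \<Rightarrow> 'n \<Rightarrow> bool) \<Rightarrow> ('n \<Rightarrow> 'n \<Rightarrow> bool) \<Rightarrow> ('n \<Rightarrow> real) \<Rightarrow> real^('n + 'n)^('n + 'n)" where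
  "multiplex_laplacian E1 E2 w = (\<chi> a b.
     (case (a, b) of
        (Inl i, Inl j) \<Rightarrow> laplacian E1 $ i $ j + (if i = j then w i else 0)
      | (Inr i, Inr j) \<Rightarrow> laplacian E2 $ i $ j + (if i = j then w i else 0)
      | (Inl i, Inr j) \<Rightarrow> (if i = j then - w i else 0)
      | (Inr i, Inl j) \<Rightarrow> (if i = j then - w i else 0)))"

text \<open>All matrices used here are real symmetric, so the eigenvalues are real and the
  geometric multiplicity (dimension of the eigenspace) equals the algebraic one.\<close>
definition eigenvalues :: "real^'m^'m \<Rightarrow> real set" where
  "eigenvalues A = {l. \<exists>x. x \<noteq> 0 \<and> A *v x = l *\<^sub>R x}"

definition lambda_max :: "real^'m^'m \<Rightarrow> real" where
  "lambda_max A = Max (eigenvalues A)"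

definition eigenspace :: "real^'m^'m \<Rightarrow> real \<Rightarrow> (real^'m) set" where
  "eigenspace A l = {x. A *v x = l *\<^sub>R x}"

definition simple_eigenvalue :: "real^'m^'m \<Rightarrow> real \<Rightarrow> bool" where
  "simple_eigenvalue A l \<longleftrightarrow> l \<in> eigenvalues A \<and> dim (eigenspace A l) = 1"

definition feasible_weights :: "real \<Rightarrow> ('n::finite \<Rightarrow> real) set" where
  "feasible_weights c = {w. (\<forall>i. 0 \<le> w i) \<and> (\<Sum>i\<in>UNIV. w i) = c}"

definition lambda_star ::
  "('n::finite \<Rightarrow> 'n \<Rightarrow> bool) \<Rightarrow> ('n \<Rightarrow> 'n \<Rightarrow> bool) \<Rightarrow> real \<Rightarrow> real" where
  "lambda_star E1 E2 c = Inf (lambda_max ` multiplex_laplacian E1 E2 ` feasible_weights c)"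

definition lambda_star_simple ::
  "('n::finite \<Rightarrow> 'n \<Rightarrow> bool) \<Rightarrow> ('n \<Rightarrow> 'n \<Rightarrow> bool) \<Rightarrow> real \<Rightarrow> bool" where
  "lambda_star_simple E1 E2 c \<longleftrightarrow>
     (\<exists>w\<in>feasible_weights c.
        lambda_max (multiplex_laplacian E1 E2 w) = lambda_star E1 E2 c \<and>
        simple_eigenvalue (multiplex_laplacian E1 E2 w) (lambda_star E1 E2 c))"

text \<open>The embedding problem: vectors x a in R^n (n = 2N, modelled as real^('n+'n)) and xi.
  The sum over undirected edges {i,j} of E1 and E2 is written as half the sum over
  ordered pairs (i,j) with E i j.\<close>
definition emb_feasible ::
  "('n::finite + 'n \<Rightarrow> real^('n + 'n)) \<Rightarrow> real \<Rightarrow> bool" where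
  "emb_feasible x \<xi> \<longleftrightarrow>
     (\<forall>i. norm (x (Inl i) - x (Inr i)) ^ 2 \<ge> \<xi>) \<and> (\<Sum>a\<in>UNIV. norm (x a) ^ 2) = 1"

definition emb_objective ::
  "('n::finite \<Rightarrow> 'n \<Rightarrow> bool) \<Rightarrow> ('n \<Rightarrow> 'n \<Rightarrow> bool) \<Rightarrow> real \<Rightarrow>
   ('n + 'n \<Rightarrow> real^('n + 'n)) \<Rightarrow> real \<Rightarrow> real" where
  "emb_objective E1 E2 c x \<xi> = c * \<xi>
     + (1/2) * (\<Sum>i\<in>UNIV. \<Sum>j\<in>UNIV. if E1 i j then norm (x (Inl i) - x (Inl j)) ^ 2 else 0)
     + (1/2) * (\<Sum>i\<in>UNIV. \<Sum>j\<in>UNIV. if E2 i j then norm (x (Inr i) - x (Inr j)) ^ 2 else 0)"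

definition emb_optimal ::
  "('n::finite \<Rightarrow> 'n \<Rightarrow> bool) \<Rightarrow> ('n \<Rightarrow> 'n \<Rightarrow> bool) \<Rightarrow> real \<Rightarrow>
   ('n + 'n \<Rightarrow> real^('n + 'n)) \<Rightarrow> real \<Rightarrow> bool" where
  "emb_optimal E1 E2 c x \<xi> \<longleftrightarrow> emb_feasible x \<xi> \<and>
     (\<forall>y \<eta>. emb_feasible y \<eta> \<longrightarrow> emb_objective E1 E2 c y \<eta> \<le> emb_objective E1 E2 c x \<xi>)"

end

(* Lifting v by zero to the second layer gives a test vector showing lambda_max L(w) \<ge> lambda1
   for every admissible w, with equality only if w vanishes on the support of v; so
   lambda_star c \<ge> lambda1, with equality at c = 0 because lambda1 dominates the spectrum of L2.
   Equality propagates along [0, c1) by real induction: where the optimum is simple, its top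
   eigenspace is spanned by the lift of v, and the spectral gap below it absorbs extra weight at a
   vertex where v vanishes; the bound lambda_star (c + t) \<le> lambda_star c + 4 t passes to limits.
   Finally the embedding objective is at most the sum of the Rayleigh quotients of the coordinate
   vectors of the embedding, hence at most lambda1, while the lift of v attains lambda1.  So every
   coordinate vector of an optimal embedding is a top eigenvector of an optimal L(w), i.e. a
   multiple of the lift of v, and a rotation moves the common direction onto an axis. *)

theory Submission
  imports Defs
begin

section \<open>Rayleigh quotients of symmetric matrices\<close>

lemma symmetric_matrix_inner:
  assumes "transpose A = A"
  shows "(A *v x) \<bullet> y = x \<bullet> (A *v (y :: real^'m))"
  by (metis assms dot_lmul_matrix vector_transpose_matrix)

lemma symmetric_eigenvectors_orthogonal:
  assumes "transpose A = A" and "A *v x = l *\<^sub>R x" and "A *v y = m *\<^sub>R (y :: real^'m)"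
    and "l \<noteq> m"
  shows "x \<bullet> y = 0"
proof -
  have "l * (x \<bullet> y) = m * (x \<bullet> y)"
    using symmetric_matrix_inner[OF assms(1), of x y] assms(2,3) by simp
  then show ?thesis using assms(4) by simp
qed

lemma linear_term_zero_if_quadratic_nonpos:
  fixes a b :: real
  assumes "\<And>t. t * a + t\<^sup>2 * b \<le> 0"
  shows "a = 0"
proof (rule ccontr)
  assume "a \<noteq> 0"
  define B where "B = \<bar>b\<bar> + 1"
  define t where "t = a / B"
  have "B > 0" by (simp add: B_def add_nonneg_pos)
  have "0 < a\<^sup>2 / B\<^sup>2" using \<open>a \<noteq> 0\<close> \<open>B > 0\<close> by simp
  also have "\<dots> = t * a - t\<^sup>2 * (B - 1)"
    using \<open>B > 0\<close> by (simp add: t_def field_simps power2_eq_square)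
  also have "\<dots> \<le> t * a + t\<^sup>2 * b"
    using mult_left_mono[of "- \<bar>b\<bar>" b "t\<^sup>2"] by (simp add: B_def)
  finally show False using assms[of t] by simp
qed

text \<open>The form \<open>M (y \<bullet> y) - y \<bullet> (A y)\<close> is nonnegative and vanishes at \<open>z\<close>, so its first
  variation at \<open>z\<close> vanishes.\<close>
lemma quadratic_form_max_imp_eigenvector:
  fixes A :: "real^'m^'m"
  assumes A: "transpose A = A" and le: "\<And>y. y \<bullet> (A *v y) \<le> M * (y \<bullet> y)"
    and eq: "z \<bullet> (A *v z) = M * (z \<bullet> z)"
  shows "A *v z = M *\<^sub>R z"
proof -
  have "2 * (y \<bullet> (A *v z - M *\<^sub>R z)) = 0" for y
  proof (rule linear_term_zero_if_quadratic_nonpos)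
    fix t :: real
    have "(z + t *\<^sub>R y) \<bullet> (A *v (z + t *\<^sub>R y)) \<le> M * ((z + t *\<^sub>R y) \<bullet> (z + t *\<^sub>R y))"
      by (rule le)
    moreover have "z \<bullet> (A *v y) = y \<bullet> (A *v z)"
      by (metis symmetric_matrix_inner[OF A] inner_commute)
    ultimately show "t * (2 * (y \<bullet> (A *v z - M *\<^sub>R z))) + t\<^sup>2 * (y \<bullet> (A *v y) - M * (y \<bullet> y)) \<le> 0"
      using eq
      by (simp add: matrix_vector_right_distrib matrix_vector_mult_scaleR inner_add_left
          inner_add_right inner_diff_right inner_commute power2_eq_square algebra_simps)
  qed
  from this[of "A *v z - M *\<^sub>R z"] show ?thesis by simp
qed

lemma quadratic_form_attains_max_on_subspace:
  fixes A :: "real^'m^'m"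
  assumes "subspace S" and "S \<noteq> {0}"
  shows "\<exists>z0\<in>S. z0 \<bullet> z0 = 1 \<and> (\<forall>z\<in>S. z \<bullet> (A *v z) \<le> (z0 \<bullet> (A *v z0)) * (z \<bullet> z))"
proof -
  let ?K = "sphere 0 1 \<inter> S"
  have "compact ?K"
    using assms(1) by (intro compact_Int_closed compact_sphere closed_subspace)
  obtain u where "u \<in> S" "u \<noteq> 0" using assms(1,2) subspace_0 by blast
  then have "u /\<^sub>R norm u \<in> ?K" using assms(1) by (simp add: subspace_scale)
  then have "?K \<noteq> {}" by blast
  moreover have "continuous_on ?K (\<lambda>z. z \<bullet> (A *v z))" by (intro continuous_intros)
  ultimately obtain z0 where z0: "z0 \<in> ?K" "\<And>z. z \<in> ?K \<Longrightarrow> z \<bullet> (A *v z) \<le> z0 \<bullet> (A *v z0)"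
    using continuous_attains_sup[OF \<open>compact ?K\<close>] by blast
  have "z \<bullet> (A *v z) \<le> (z0 \<bullet> (A *v z0)) * (z \<bullet> z)" if "z \<in> S" for z
  proof (cases "z = 0")
    case False
    then have "z /\<^sub>R norm z \<in> ?K" using assms(1) that by (simp add: subspace_scale)
    then have "(z /\<^sub>R norm z) \<bullet> (A *v (z /\<^sub>R norm z)) \<le> z0 \<bullet> (A *v z0)"
      by (rule z0(2))
    then have "(z \<bullet> (A *v z)) / (z \<bullet> z) \<le> z0 \<bullet> (A *v z0)"
      by (simp add: matrix_vector_mult_scaleR power2_norm_eq_inner[symmetric] power2_eq_square
          divide_inverse mult_ac)
    then show ?thesis using False by (simp add: divide_le_eq)
  qed simp
  moreover have "z0 \<bullet> z0 = 1" using z0(1) by (simp add: dot_square_norm)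
  ultimately show ?thesis using z0(1) by blast
qed

lemma finite_eigenvalues:
  fixes A :: "real^'m^'m"
  assumes A: "transpose A = A"
  shows "finite (eigenvalues A)"
proof -
  define f where "f l = (SOME x. x \<noteq> 0 \<and> A *v x = l *\<^sub>R x)" for l
  have f: "f l \<noteq> 0 \<and> A *v f l = l *\<^sub>R f l" if "l \<in> eigenvalues A" for l
  proof -
    have "\<exists>x. x \<noteq> 0 \<and> A *v x = l *\<^sub>R x" using that by (simp add: eigenvalues_def)
    then show ?thesis unfolding f_def by (rule someI_ex)
  qed
  have inj: "inj_on f (eigenvalues A)"
  proof (rule inj_onI)
    fix l m assume lm: "l \<in> eigenvalues A" "m \<in> eigenvalues A" "f l = f m"
    have "l *\<^sub>R f l = m *\<^sub>R f l" using f[OF lm(1)] f[OF lm(2)] lm(3) by metis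
    then show "l = m" using f[OF lm(1)] by simp
  qed
  have "pairwise orthogonal (f ` eigenvalues A)"
  proof (rule pairwiseI)
    fix x y assume "x \<in> f ` eigenvalues A" "y \<in> f ` eigenvalues A" "x \<noteq> y"
    then obtain l m where lm: "l \<in> eigenvalues A" "m \<in> eigenvalues A" "x = f l" "y = f m" "l \<noteq> m"
      by blast
    show "orthogonal x y"
      unfolding orthogonal_def lm(3,4)
      using symmetric_eigenvectors_orthogonal[OF A, of "f l" l "f m" m] f[OF lm(1)] f[OF lm(2)] lm(5)
      by blast
  qed
  moreover have "0 \<notin> f ` eigenvalues A"
  proof
    assume "0 \<in> f ` eigenvalues A"
    then obtain l where "l \<in> eigenvalues A" "f l = 0" by (metis imageE)
    then show False using f by simp
  qed
  ultimately have "independent (f ` eigenvalues A)"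
    by (rule pairwise_orthogonal_independent)
  then have "finite (f ` eigenvalues A)" by (rule finiteI_independent)
  then show ?thesis using finite_imageD[OF _ inj] by blast
qed

lemma
  fixes A :: "real^'m^'m"
  assumes A: "transpose A = A"
  shows lambda_max_eigenvalue: "lambda_max A \<in> eigenvalues A"
    and quadratic_form_le_lambda_max: "z \<bullet> (A *v z) \<le> lambda_max A * (z \<bullet> z)"
proof -
  obtain k :: 'm where True by simp
  have "axis k 1 \<in> (UNIV :: (real^'m) set) - {0}" by simp
  then have "UNIV \<noteq> {0 :: real^'m}" by blast
  then obtain z0 where z0: "z0 \<bullet> z0 = 1" "\<And>z. z \<bullet> (A *v z) \<le> (z0 \<bullet> (A *v z0)) * (z \<bullet> z)"
    using quadratic_form_attains_max_on_subspace[OF subspace_UNIV, where A = A] by blast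
  define M where "M = z0 \<bullet> (A *v z0)"
  have "A *v z0 = M *\<^sub>R z0"
    by (rule quadratic_form_max_imp_eigenvector[OF A]) (use z0 in \<open>simp_all add: M_def\<close>)
  moreover have "z0 \<noteq> 0" using z0(1) by auto
  ultimately have M: "M \<in> eigenvalues A" unfolding eigenvalues_def by blast
  have "l \<le> M" if "l \<in> eigenvalues A" for l
  proof -
    have "\<exists>x. x \<noteq> 0 \<and> A *v x = l *\<^sub>R x" using that by (simp add: eigenvalues_def)
    then obtain x where x: "x \<noteq> 0" "A *v x = l *\<^sub>R x" by blast
    then have "l * (x \<bullet> x) \<le> M * (x \<bullet> x)" using z0(2)[of x] by (simp add: M_def)
    then show ?thesis using x(1) by simp
  qed
  then have "lambda_max A = M"
    unfolding lambda_max_def using M finite_eigenvalues[OF A] by (intro Max_eqI) auto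
  then show "lambda_max A \<in> eigenvalues A" and "z \<bullet> (A *v z) \<le> lambda_max A * (z \<bullet> z)"
    using M z0(2) by (simp_all add: M_def)
qed

lemma lambda_max_eigenvector:
  fixes A :: "real^'m^'m"
  assumes "transpose A = A"
  obtains x where "x \<noteq> 0" and "A *v x = lambda_max A *\<^sub>R x"
  using lambda_max_eigenvalue[OF assms] by (auto simp: eigenvalues_def)

lemma lambda_max_le:
  fixes A :: "real^'m^'m"
  assumes A: "transpose A = A" and bound: "\<And>z. z \<bullet> (A *v z) \<le> K * (z \<bullet> z)"
  shows "lambda_max A \<le> K"
proof -
  obtain x where x: "x \<noteq> 0" "A *v x = lambda_max A *\<^sub>R x"
    using lambda_max_eigenvector[OF A] .
  then have "lambda_max A * (x \<bullet> x) \<le> K * (x \<bullet> x)" using bound[of x] by simp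
  then show ?thesis using x(1) by simp
qed

lemma spectral_gap:
  fixes A :: "real^'m^'m"
  assumes A: "transpose A = A" and top: "eigenspace A (lambda_max A) \<subseteq> span {V}"
  obtains g where "g < lambda_max A" and "\<And>y. y \<bullet> V = 0 \<Longrightarrow> y \<bullet> (A *v y) \<le> g * (y \<bullet> y)"
proof (cases "{y. y \<bullet> V = 0} = {0}")
  case True
  show thesis
  proof (rule that[of "lambda_max A - 1"])
    fix y assume "y \<bullet> V = 0"
    then have "y = 0" using True by blast
    then show "y \<bullet> (A *v y) \<le> (lambda_max A - 1) * (y \<bullet> y)" by simp
  qed simp
next
  case False
  then obtain y0 where y0: "y0 \<bullet> V = 0" "y0 \<bullet> y0 = 1"
      and gap: "\<And>y. y \<bullet> V = 0 \<Longrightarrow> y \<bullet> (A *v y) \<le> (y0 \<bullet> (A *v y0)) * (y \<bullet> y)"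
    using quadratic_form_attains_max_on_subspace[OF subspace_hyperplane2, where A = A] by blast
  have "y0 \<bullet> (A *v y0) \<noteq> lambda_max A"
  proof
    assume "y0 \<bullet> (A *v y0) = lambda_max A"
    then have "A *v y0 = lambda_max A *\<^sub>R y0"
      using quadratic_form_max_imp_eigenvector[OF A quadratic_form_le_lambda_max[OF A]] y0(2)
      by simp
    then obtain k where "y0 = k *\<^sub>R V"
      using top by (auto simp: eigenspace_def span_singleton)
    then show False using y0 by (auto simp: inner_commute)
  qed
  moreover have "y0 \<bullet> (A *v y0) \<le> lambda_max A"
    using quadratic_form_le_lambda_max[OF A, of y0] y0(2) by simp
  ultimately show thesis using that[OF _ gap] by linarith
qed

lemma rotation_to_axis:
  fixes a :: "real^'m"
  assumes "2 \<le> CARD('m)"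
  obtains Q \<gamma> where "rotation_matrix Q" and "Q *v a = \<gamma> *\<^sub>R axis k 1"
proof (cases "a = 0")
  case True
  then show thesis
    using that[of "mat 1" 0] by (simp add: rotation_matrix_def orthogonal_matrix_id)
next
  case False
  then have "norm (a /\<^sub>R norm a) = 1" by simp
  then obtain A where A: "rotation_matrix A" "A *v axis k 1 = a /\<^sub>R norm a"
    using rotation_matrix_exists_basis[OF assms] by blast
  then have "transpose A ** A = mat 1"
    by (simp add: rotation_matrix_def orthogonal_matrix_def)
  then have "transpose A *v a = transpose A *v (norm a *\<^sub>R (A *v axis k 1))"
    using A(2) False by simp
  also have "\<dots> = norm a *\<^sub>R axis k 1"
    using \<open>transpose A ** A = mat 1\<close>
    by (simp add: matrix_vector_mult_scaleR matrix_vector_mul_assoc)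
  finally have "transpose A *v a = norm a *\<^sub>R axis k 1" .
  moreover have "rotation_matrix (transpose A)"
    using A(1) by (simp add: rotation_matrix_def)
  ultimately show thesis using that by blast
qed

lemma two_le_card_sum: "2 \<le> CARD('a::finite + 'a)"
proof -
  obtain i :: 'a where True by simp
  have "card {Inl i, Inr i :: 'a + 'a} = 2" by simp
  moreover have "card {Inl i, Inr i :: 'a + 'a} \<le> CARD('a + 'a)" by (rule card_mono) simp_all
  ultimately show ?thesis by simp
qed

section \<open>Laplacian quadratic forms\<close>

lemma transpose_eq_self_iff: "transpose A = A \<longleftrightarrow> (\<forall>i j. A $ i $ j = A $ j $ i)"
  by (auto simp: transpose_def vec_eq_iff)

lemma laplacian_symmetric:
  assumes "simple_graph E"
  shows "transpose (laplacian E) = laplacian E"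
  using assms unfolding transpose_eq_self_iff simple_graph_def laplacian_def by auto

lemma laplacian_mult_vec:
  assumes "simple_graph E"
  shows "(laplacian E *v a) $ i = (\<Sum>j\<in>UNIV. if E i j then a $ i - a $ j else 0)"
proof -
  have "\<not> E i i" using assms by (simp add: simple_graph_def)
  have "(laplacian E *v a) $ i
      = (\<Sum>j\<in>UNIV. (if i = j then real (degree E i) else if E i j then -1 else 0) * a $ j)"
    by (simp add: laplacian_def matrix_vector_mult_def)
  also have "\<dots> = (\<Sum>j\<in>UNIV. (if i = j then real (degree E i) * a $ j else 0))
      + (\<Sum>j\<in>UNIV. if E i j then - a $ j else 0)"
    using \<open>\<not> E i i\<close> by (subst sum.distrib[symmetric]) (rule sum.cong, auto)
  also have "\<dots> = (\<Sum>j\<in>UNIV. if E i j then a $ i else 0) + (\<Sum>j\<in>UNIV. if E i j then - a $ j else 0)"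
    by (simp add: degree_def sum.If_cases)
  also have "\<dots> = (\<Sum>j\<in>UNIV. if E i j then a $ i - a $ j else 0)"
    by (subst sum.distrib[symmetric]) (rule sum.cong, auto)
  finally show ?thesis .
qed

lemma laplacian_quadratic_form:
  assumes "simple_graph E"
  shows "a \<bullet> (laplacian E *v a) = (1/2) * (\<Sum>i\<in>UNIV. \<Sum>j\<in>UNIV. if E i j then (a $ i - a $ j)\<^sup>2 else 0)"
proof -
  have sym: "E i j = E j i" for i j using assms unfolding simple_graph_def by blast
  define S where "S = (\<Sum>i\<in>UNIV. \<Sum>j\<in>UNIV. if E i j then a $ i * (a $ i - a $ j) else 0)"
  have "a \<bullet> (laplacian E *v a) = S"
    unfolding S_def inner_vec_def laplacian_mult_vec[OF assms]
    by (simp add: sum_distrib_left if_distrib cong: if_cong)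
  moreover have "(\<Sum>i\<in>UNIV. \<Sum>j\<in>UNIV. if E i j then a $ j * (a $ j - a $ i) else 0) = S"
    unfolding S_def using sym by (subst sum.swap) simp
  moreover have "(\<Sum>i\<in>UNIV. \<Sum>j\<in>UNIV. if E i j then (a $ i - a $ j)\<^sup>2 else 0)
     = S + (\<Sum>i\<in>UNIV. \<Sum>j\<in>UNIV. if E i j then a $ j * (a $ j - a $ i) else 0)"
    unfolding S_def sum.distrib[symmetric]
    by (intro sum.cong refl) (simp add: power2_eq_square algebra_simps)
  ultimately show ?thesis by simp
qed

definition layer1 :: "real^('n::finite + 'n) \<Rightarrow> real^'n" where
  "layer1 z = (\<chi> i. z $ Inl i)"

definition layer2 :: "real^('n::finite + 'n) \<Rightarrow> real^'n" where
  "layer2 z = (\<chi> i. z $ Inr i)"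

lemma layer1_nth [simp]: "layer1 z $ i = z $ Inl i"
  and layer2_nth [simp]: "layer2 z $ i = z $ Inr i"
  by (simp_all add: layer1_def layer2_def)

lemma sum_UNIV_sum:
  "(\<Sum>a\<in>(UNIV :: ('a::finite + 'b::finite) set). f a) = (\<Sum>i\<in>UNIV. f (Inl i)) + (\<Sum>j\<in>UNIV. f (Inr j))"
proof -
  have "(\<Sum>a\<in>(UNIV :: ('a + 'b) set). f a) = (\<Sum>a\<in>UNIV <+> UNIV. f a)" by simp
  also have "\<dots> = (\<Sum>i\<in>UNIV. f (Inl i)) + (\<Sum>j\<in>UNIV. f (Inr j))"
    by (subst sum.Plus) (simp_all add: comp_def)
  finally show ?thesis .
qed

lemma inner_layers: "z \<bullet> y = layer1 z \<bullet> layer1 y + layer2 z \<bullet> layer2 y"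
  by (simp add: inner_vec_def sum_UNIV_sum)

lemma multiplex_laplacian_mult_vec_Inl:
  "(multiplex_laplacian E1 E2 w *v z) $ Inl i
     = (laplacian E1 *v layer1 z) $ i + w i * (z $ Inl i - z $ Inr i)"
proof -
  have "(multiplex_laplacian E1 E2 w *v z) $ Inl i
      = (\<Sum>j\<in>UNIV. (laplacian E1 $ i $ j + (if i = j then w i else 0)) * z $ Inl j)
      + (\<Sum>j\<in>UNIV. (if i = j then - w i else 0) * z $ Inr j)"
    by (simp add: matrix_vector_mult_def multiplex_laplacian_def sum_UNIV_sum)
  then show ?thesis
    by (simp add: matrix_vector_mult_def distrib_right sum.distrib right_diff_distrib
        if_distrib[where f = "\<lambda>u. u * y" for y] cong: if_cong)
qed

lemma multiplex_laplacian_mult_vec_Inr: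
  "(multiplex_laplacian E1 E2 w *v z) $ Inr i
     = (laplacian E2 *v layer2 z) $ i + w i * (z $ Inr i - z $ Inl i)"
proof -
  have "(multiplex_laplacian E1 E2 w *v z) $ Inr i
      = (\<Sum>j\<in>UNIV. (if i = j then - w i else 0) * z $ Inl j)
      + (\<Sum>j\<in>UNIV. (laplacian E2 $ i $ j + (if i = j then w i else 0)) * z $ Inr j)"
    by (simp add: matrix_vector_mult_def multiplex_laplacian_def sum_UNIV_sum)
  then show ?thesis
    by (simp add: matrix_vector_mult_def distrib_right sum.distrib right_diff_distrib
        if_distrib[where f = "\<lambda>u. u * y" for y] cong: if_cong)
qed

lemma multiplex_laplacian_symmetric:
  assumes "simple_graph E1" and "simple_graph E2"
  shows "transpose (multiplex_laplacian E1 E2 w) = multiplex_laplacian E1 E2 w"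
  using laplacian_symmetric[OF assms(1)] laplacian_symmetric[OF assms(2)]
  unfolding transpose_eq_self_iff multiplex_laplacian_def by (auto split: sum.split)

lemma multiplex_quadratic_form:
  "z \<bullet> (multiplex_laplacian E1 E2 w *v z)
     = layer1 z \<bullet> (laplacian E1 *v layer1 z) + layer2 z \<bullet> (laplacian E2 *v layer2 z)
       + (\<Sum>i\<in>UNIV. w i * (z $ Inl i - z $ Inr i)\<^sup>2)"
  by (simp add: inner_vec_def sum_UNIV_sum multiplex_laplacian_mult_vec_Inl
      multiplex_laplacian_mult_vec_Inr sum.distrib[symmetric] power2_eq_square algebra_simps)

lemma component_diff_sq_le: "((z :: real^'m) $ p - z $ q)\<^sup>2 \<le> 4 * (z \<bullet> z)"
proof -
  have "\<bar>z $ p - z $ q\<bar> \<le> 2 * norm z"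
    using abs_triangle_ineq4[of "z $ p" "z $ q"] component_le_norm_cart[of z p]
      component_le_norm_cart[of z q] by linarith
  then have "(z $ p - z $ q)\<^sup>2 \<le> (2 * norm z)\<^sup>2"
    by (metis abs_le_square_iff abs_mult abs_norm_cancel abs_numeral)
  then show ?thesis by (simp add: power_mult_distrib dot_square_norm)
qed

lemma multiplex_quadratic_form_add_weight:
  assumes "0 \<le> t"
  shows "z \<bullet> (multiplex_laplacian E1 E2 (w(j := w j + t)) *v z)
    \<le> z \<bullet> (multiplex_laplacian E1 E2 w *v z) + 4 * t * (z \<bullet> z)"
proof -
  have "(w(j := w j + t)) i = w i + (if i = j then t else 0)" for i by simp
  then have "(\<Sum>i\<in>UNIV. (w(j := w j + t)) i * (z $ Inl i - z $ Inr i)\<^sup>2)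
      = (\<Sum>i\<in>UNIV. w i * (z $ Inl i - z $ Inr i)\<^sup>2) + t * (z $ Inl j - z $ Inr j)\<^sup>2"
    by (simp add: distrib_right sum.distrib if_distrib[where f = "\<lambda>u. u * y" for y] cong: if_cong)
  moreover have "t * (z $ Inl j - z $ Inr j)\<^sup>2 \<le> t * (4 * (z \<bullet> z))"
    using component_diff_sq_le assms by (rule mult_left_mono)
  ultimately show ?thesis by (simp add: multiplex_quadratic_form)
qed

lemma lambda_max_multiplex_add_weight:
  assumes "simple_graph E1" and "simple_graph E2" and "0 \<le> t"
  shows "lambda_max (multiplex_laplacian E1 E2 (w(j := w j + t)))
    \<le> lambda_max (multiplex_laplacian E1 E2 w) + 4 * t"
proof (rule lambda_max_le[OF multiplex_laplacian_symmetric[OF assms(1,2)]])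
  fix z
  show "z \<bullet> (multiplex_laplacian E1 E2 (w(j := w j + t)) *v z)
    \<le> (lambda_max (multiplex_laplacian E1 E2 w) + 4 * t) * (z \<bullet> z)"
    using multiplex_quadratic_form_add_weight[OF assms(3), of z E1 E2 w j]
      quadratic_form_le_lambda_max[OF multiplex_laplacian_symmetric[OF assms(1,2), of w], of z]
    by (simp add: algebra_simps)
qed

definition lift_layer1 :: "real^'n \<Rightarrow> real^('n::finite + 'n)" where
  "lift_layer1 v = (\<chi> a. case a of Inl i \<Rightarrow> v $ i | Inr i \<Rightarrow> 0)"

lemma lift_layer1_nth [simp]:
  "lift_layer1 v $ Inl i = v $ i" "lift_layer1 v $ Inr i = 0"
  by (simp_all add: lift_layer1_def)

lemma layers_lift_layer1 [simp]: "layer1 (lift_layer1 v) = v" "layer2 (lift_layer1 v) = 0"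
  by (simp_all add: vec_eq_iff)

lemma inner_lift_layer1 [simp]: "lift_layer1 v \<bullet> lift_layer1 v = v \<bullet> v"
  by (simp add: inner_layers)

lemma norm_lift_layer1 [simp]: "norm (lift_layer1 v) = norm v"
  by (simp add: norm_eq_sqrt_inner)

lemma lift_layer1_eq_0_iff [simp]: "lift_layer1 v = 0 \<longleftrightarrow> v = 0"
proof
  assume "lift_layer1 v = 0"
  then have "layer1 (lift_layer1 v) = layer1 0" by simp
  then show "v = 0" by (simp add: vec_eq_iff)
qed (simp add: vec_eq_iff lift_layer1_def split: sum.split)

lemma multiplex_quadratic_form_lift_layer1:
  "lift_layer1 v \<bullet> (multiplex_laplacian E1 E2 w *v lift_layer1 v)
     = v \<bullet> (laplacian E1 *v v) + (\<Sum>i\<in>UNIV. w i * (v $ i)\<^sup>2)"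
  by (simp add: multiplex_quadratic_form)

lemma multiplex_laplacian_lift_layer1_eigenvector:
  assumes "laplacian E1 *v v = l *\<^sub>R v" and "\<And>i. w i * v $ i = 0"
  shows "multiplex_laplacian E1 E2 w *v lift_layer1 v = l *\<^sub>R lift_layer1 v"
proof -
  have "(multiplex_laplacian E1 E2 w *v lift_layer1 v) $ a = (l *\<^sub>R lift_layer1 v) $ a" for a
    using assms
    by (cases a) (simp_all add: multiplex_laplacian_mult_vec_Inl multiplex_laplacian_mult_vec_Inr
        mult.commute)
  then show ?thesis by (simp add: vec_eq_iff)
qed

section \<open>Coordinates of an embedding\<close>

definition coordinate_vec :: "('a \<Rightarrow> real^'m) \<Rightarrow> 'm \<Rightarrow> real^'a::finite" where
  "coordinate_vec y k = (\<chi> a. y a $ k)"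

lemma coordinate_vec_nth [simp]: "coordinate_vec y k $ a = y a $ k"
  by (simp add: coordinate_vec_def)

lemma power2_norm_vec: "(norm (p :: real^'m))\<^sup>2 = (\<Sum>k\<in>UNIV. (p $ k)\<^sup>2)"
  unfolding power2_norm_eq_inner inner_vec_def by (simp add: power2_eq_square)

lemma sum_inner_coordinate_vec:
  "(\<Sum>k\<in>UNIV. coordinate_vec y k \<bullet> coordinate_vec y k) = (\<Sum>a\<in>UNIV. (norm (y a))\<^sup>2)"
proof -
  have "(\<Sum>k\<in>UNIV. coordinate_vec y k \<bullet> coordinate_vec y k) = (\<Sum>k\<in>UNIV. \<Sum>a\<in>UNIV. (y a $ k)\<^sup>2)"
    by (simp add: inner_vec_def power2_eq_square)
  also have "\<dots> = (\<Sum>a\<in>UNIV. \<Sum>k\<in>UNIV. (y a $ k)\<^sup>2)" by (rule sum.swap)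
  finally show ?thesis by (simp add: power2_norm_vec)
qed

lemma sum_components_edge_sq:
  fixes f :: "'a::finite \<Rightarrow> real^'m"
  shows "(\<Sum>k\<in>UNIV. \<Sum>i\<in>UNIV. \<Sum>j\<in>UNIV. if E i j then (f i $ k - f j $ k)\<^sup>2 else 0)
       = (\<Sum>i\<in>UNIV. \<Sum>j\<in>UNIV. if E i j then (norm (f i - f j))\<^sup>2 else 0)"
proof -
  have "(\<Sum>k\<in>UNIV. \<Sum>i\<in>UNIV. \<Sum>j\<in>UNIV. if E i j then (f i $ k - f j $ k)\<^sup>2 else 0)
      = (\<Sum>i\<in>UNIV. \<Sum>j\<in>UNIV. \<Sum>k\<in>UNIV. if E i j then (f i $ k - f j $ k)\<^sup>2 else 0)"
    by (subst sum.swap) (rule sum.cong[OF refl], rule sum.swap)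
  moreover have "(\<Sum>k\<in>UNIV. if E i j then (f i $ k - f j $ k)\<^sup>2 else 0)
      = (if E i j then (norm (f i - f j))\<^sup>2 else 0)" for i j
    by (cases "E i j") (simp_all add: power2_norm_vec)
  ultimately show ?thesis by simp
qed

lemma sum_coordinate_vec_multiplex_form:
  assumes "simple_graph E1" and "simple_graph E2"
  shows "(\<Sum>k\<in>UNIV. coordinate_vec y k \<bullet> (multiplex_laplacian E1 E2 w *v coordinate_vec y k)) =
      (1/2) * (\<Sum>i\<in>UNIV. \<Sum>j\<in>UNIV. if E1 i j then (norm (y (Inl i) - y (Inl j)))\<^sup>2 else 0)
    + (1/2) * (\<Sum>i\<in>UNIV. \<Sum>j\<in>UNIV. if E2 i j then (norm (y (Inr i) - y (Inr j)))\<^sup>2 else 0)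
    + (\<Sum>i\<in>UNIV. w i * (norm (y (Inl i) - y (Inr i)))\<^sup>2)"
proof -
  have "(\<Sum>k\<in>UNIV. \<Sum>i\<in>UNIV. w i * (y (Inl i) $ k - y (Inr i) $ k)\<^sup>2)
      = (\<Sum>i\<in>UNIV. \<Sum>k\<in>UNIV. w i * (y (Inl i) $ k - y (Inr i) $ k)\<^sup>2)"
    by (rule sum.swap)
  also have "\<dots> = (\<Sum>i\<in>UNIV. w i * (norm (y (Inl i) - y (Inr i)))\<^sup>2)"
    by (simp add: power2_norm_vec sum_distrib_left)
  finally have weights: "(\<Sum>k\<in>UNIV. \<Sum>i\<in>UNIV. w i * (y (Inl i) $ k - y (Inr i) $ k)\<^sup>2)
      = (\<Sum>i\<in>UNIV. w i * (norm (y (Inl i) - y (Inr i)))\<^sup>2)" .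
  show ?thesis
    unfolding multiplex_quadratic_form laplacian_quadratic_form[OF assms(1)]
      laplacian_quadratic_form[OF assms(2)] sum.distrib sum_distrib_left[symmetric]
    using sum_components_edge_sq[of E1 "\<lambda>i. y (Inl i)"] sum_components_edge_sq[of E2 "\<lambda>i. y (Inr i)"]
      weights by (simp cong: if_cong)
qed

lemma emb_objective_le_sum_coordinate_vec:
  assumes "simple_graph E1" and "simple_graph E2"
    and "w \<in> feasible_weights c" and "emb_feasible y \<eta>"
  shows "emb_objective E1 E2 c y \<eta>
    \<le> (\<Sum>k\<in>UNIV. coordinate_vec y k \<bullet> (multiplex_laplacian E1 E2 w *v coordinate_vec y k))"
proof -
  have "c * \<eta> = (\<Sum>i\<in>UNIV. w i * \<eta>)"
    using assms(3) by (simp add: feasible_weights_def sum_distrib_right[symmetric])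
  also have "\<dots> \<le> (\<Sum>i\<in>UNIV. w i * (norm (y (Inl i) - y (Inr i)))\<^sup>2)"
    using assms(3,4) by (intro sum_mono mult_left_mono) (auto simp: feasible_weights_def emb_feasible_def)
  finally show ?thesis
    unfolding emb_objective_def sum_coordinate_vec_multiplex_form[OF assms(1,2)] by linarith
qed

text \<open>Summing the Rayleigh bound over the coordinates of an embedding is weak duality; when it
  is tight, every coordinate attains the bound.\<close>
lemma coordinate_vec_eigenvector_if_tight:
  assumes "simple_graph E1" and "simple_graph E2"
    and "w \<in> feasible_weights c" and "emb_feasible y \<eta>"
    and "lambda_max (multiplex_laplacian E1 E2 w) \<le> emb_objective E1 E2 c y \<eta>"
  shows "multiplex_laplacian E1 E2 w *v coordinate_vec y k
    = lambda_max (multiplex_laplacian E1 E2 w) *\<^sub>R coordinate_vec y k"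
proof -
  let ?A = "multiplex_laplacian E1 E2 w"
  let ?M = "lambda_max ?A"
  have A: "transpose ?A = ?A" by (rule multiplex_laplacian_symmetric[OF assms(1,2)])
  define defect where "defect k = ?M * (coordinate_vec y k \<bullet> coordinate_vec y k)
    - coordinate_vec y k \<bullet> (?A *v coordinate_vec y k)" for k
  have nonneg: "\<And>k. 0 \<le> defect k"
    using quadratic_form_le_lambda_max[OF A] by (simp add: defect_def)
  have "(\<Sum>k\<in>UNIV. defect k)
      = ?M - (\<Sum>k\<in>UNIV. coordinate_vec y k \<bullet> (?A *v coordinate_vec y k))"
    using assms(4)
    by (simp add: defect_def sum_subtractf sum_distrib_left[symmetric] sum_inner_coordinate_vec
        emb_feasible_def)
  also have "\<dots> \<le> 0"
    using emb_objective_le_sum_coordinate_vec[OF assms(1-4)] assms(5) by linarith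
  finally have "defect k = 0"
    using nonneg sum_nonneg[of UNIV defect] sum_nonneg_eq_0_iff[of UNIV defect] by auto
  then show ?thesis
    using quadratic_form_max_imp_eigenvector[OF A quadratic_form_le_lambda_max[OF A]]
    by (simp add: defect_def)
qed

lemma rank_one_if_coordinate_vec_in_span:
  assumes "\<And>k. coordinate_vec y k \<in> span {V}"
  shows "\<exists>\<alpha>. \<forall>a. y a = V $ a *\<^sub>R \<alpha>"
proof -
  have "\<exists>\<beta>. coordinate_vec y k = \<beta> *\<^sub>R V" for k
    using assms[of k] by (auto simp: span_singleton)
  then obtain \<beta> where \<beta>: "\<And>k. coordinate_vec y k = \<beta> k *\<^sub>R V" by metis
  have "y a = V $ a *\<^sub>R (\<chi> k. \<beta> k)" for a
  proof -
    have "y a $ k = \<beta> k * V $ a" for k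
      using arg_cong[OF \<beta>[of k], of "\<lambda>z. z $ a"] by simp
    then show ?thesis by (simp add: vec_eq_iff)
  qed
  then show ?thesis by blast
qed

section \<open>The optimal spectral radius below the first critical budget\<close>

lemma real_interval_induct:
  fixes a b t :: real
  assumes "P a"
    and step: "\<And>s. a \<le> s \<Longrightarrow> s < b \<Longrightarrow> P s \<Longrightarrow> \<exists>d>0. \<forall>t. s < t \<and> t < s + d \<longrightarrow> P t"
    and limit: "\<And>s. a < s \<Longrightarrow> s \<le> b \<Longrightarrow> (\<And>u. a \<le> u \<Longrightarrow> u < s \<Longrightarrow> P u) \<Longrightarrow> P s"
    and "a \<le> t" and "t \<le> b"
  shows "P t"
proof (rule ccontr)
  assume "\<not> P t"
  define S where "S = {u. a \<le> u \<and> u \<le> b \<and> \<not> P u}"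
  define s where "s = Inf S"
  have "t \<in> S" using \<open>\<not> P t\<close> assms(4,5) by (simp add: S_def)
  have bdd: "bdd_below S" by (auto simp: S_def intro: bdd_belowI[of _ a])
  have "s \<le> t" using cInf_lower[OF \<open>t \<in> S\<close> bdd] by (simp add: s_def)
  have "a \<le> s" unfolding s_def using \<open>t \<in> S\<close> by (intro cInf_greatest) (auto simp: S_def)
  have below: "P u" if "a \<le> u" "u < s" for u
    using cInf_lower[of u S] bdd that \<open>s \<le> t\<close> assms(5) by (force simp: S_def s_def)
  have "P s"
  proof (cases "s = a")
    case False
    then show ?thesis using limit below \<open>a \<le> s\<close> \<open>s \<le> t\<close> assms(5) by simp
  qed (use assms(1) in simp)
  have "s < b"
    using \<open>P s\<close> \<open>\<not> P t\<close> \<open>s \<le> t\<close> assms(5) by (cases "s = t") auto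
  then obtain d where "d > 0" and d: "\<And>u. s < u \<Longrightarrow> u < s + d \<Longrightarrow> P u"
    using step[OF \<open>a \<le> s\<close> _ \<open>P s\<close>] by blast
  have "s + d \<le> u" if "u \<in> S" for u
  proof -
    have "s \<le> u" using cInf_lower[OF that bdd] by (simp add: s_def)
    moreover have "u \<noteq> s" using that \<open>P s\<close> by (auto simp: S_def)
    ultimately show ?thesis using that d by (force simp: S_def)
  qed
  then have "s + d \<le> s" unfolding s_def using \<open>t \<in> S\<close> by (intro cInf_greatest) auto
  then show False using \<open>d > 0\<close> by simp
qed

lemma feasible_weights_add:
  assumes "w \<in> feasible_weights c" and "0 \<le> t"
  shows "w(j := w j + t) \<in> feasible_weights (c + t)"
proof -
  have "(w(j := w j + t)) i = w i + (if i = j then t else 0)" for i by simp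
  then show ?thesis
    using assms by (simp add: feasible_weights_def sum.distrib add_nonneg_nonneg)
qed

lemma feasible_weights_nonempty:
  assumes "0 \<le> c"
  shows "(\<lambda>_::'n::finite. c / real CARD('n)) \<in> feasible_weights c"
  using assms by (simp add: feasible_weights_def)

locale dominant_layer =
  fixes E1 E2 :: "'n::finite \<Rightarrow> 'n \<Rightarrow> bool" and v :: "real^'n"
  assumes simple1: "simple_graph E1" and simple2: "simple_graph E2"
    and dominant: "lambda_max (laplacian E2) < lambda_max (laplacian E1)"
    and v_nonzero: "v \<noteq> 0"
    and v_eigenvector: "laplacian E1 *v v = lambda_max (laplacian E1) *\<^sub>R v"
begin

abbreviation "lambda1 \<equiv> lambda_max (laplacian E1)"
abbreviation "L \<equiv> multiplex_laplacian E1 E2"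

lemma L_symmetric: "transpose (L w) = L w"
  by (rule multiplex_laplacian_symmetric[OF simple1 simple2])

lemma quadratic_form_lift:
  "lift_layer1 v \<bullet> (L w *v lift_layer1 v) = lambda1 * (v \<bullet> v) + (\<Sum>i\<in>UNIV. w i * (v $ i)\<^sup>2)"
  by (simp add: multiplex_quadratic_form_lift_layer1 v_eigenvector)

lemma lambda1_le_lambda_max:
  assumes "\<And>i. 0 \<le> w i"
  shows "lambda1 \<le> lambda_max (L w)"
proof -
  have "lambda1 * (v \<bullet> v) \<le> lift_layer1 v \<bullet> (L w *v lift_layer1 v)"
    using assms by (simp add: quadratic_form_lift sum_nonneg)
  also have "\<dots> \<le> lambda_max (L w) * (v \<bullet> v)"
    using quadratic_form_le_lambda_max[OF L_symmetric[of w], of "lift_layer1 v"] by simp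
  finally show ?thesis using v_nonzero by simp
qed

lemma lambda1_le_lambda_star:
  assumes "0 \<le> c"
  shows "lambda1 \<le> lambda_star E1 E2 c"
  unfolding lambda_star_def using feasible_weights_nonempty[OF assms, where 'n = 'n]
  by (intro cInf_greatest) (auto simp: feasible_weights_def intro: lambda1_le_lambda_max)

lemma lambda_star_le_lambda_max:
  assumes "w \<in> feasible_weights c"
  shows "lambda_star E1 E2 c \<le> lambda_max (L w)"
  unfolding lambda_star_def using assms
  by (intro cInf_lower bdd_belowI[of _ lambda1])
    (auto simp: feasible_weights_def intro: lambda1_le_lambda_max)

lemma lambda_star_zero: "lambda_star E1 E2 0 = lambda1"
proof -
  have "(\<lambda>_. 0) \<in> feasible_weights 0" by (simp add: feasible_weights_def)
  then have "lambda_star E1 E2 0 \<le> lambda_max (L (\<lambda>_. 0))" by (rule lambda_star_le_lambda_max)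
  also have "lambda_max (L (\<lambda>_. 0)) \<le> lambda1"
  proof (rule lambda_max_le[OF L_symmetric])
    fix z
    have "layer2 z \<bullet> (laplacian E2 *v layer2 z) \<le> lambda1 * (layer2 z \<bullet> layer2 z)"
      using quadratic_form_le_lambda_max[OF laplacian_symmetric[OF simple2], of "layer2 z"] dominant
        mult_right_mono[of "lambda_max (laplacian E2)" lambda1 "layer2 z \<bullet> layer2 z"]
      by simp
    then show "z \<bullet> (L (\<lambda>_. 0) *v z) \<le> lambda1 * (z \<bullet> z)"
      using quadratic_form_le_lambda_max[OF laplacian_symmetric[OF simple1], of "layer1 z"]
      by (simp add: multiplex_quadratic_form inner_layers[of z z] distrib_left)
  qed
  finally show ?thesis using lambda1_le_lambda_star[of 0] by simp
qed

lemma lambda_star_add_le: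
  assumes "0 \<le> c" and "0 \<le> t"
  shows "lambda_star E1 E2 (c + t) \<le> lambda_star E1 E2 c + 4 * t"
proof -
  obtain j :: 'n where True by simp
  have "lambda_star E1 E2 (c + t) - 4 * t \<le> lambda_max (L w)" if "w \<in> feasible_weights c" for w
    using lambda_star_le_lambda_max[OF feasible_weights_add[OF that assms(2), of j]]
      lambda_max_multiplex_add_weight[OF simple1 simple2 assms(2), of w j]
    by simp
  then have "lambda_star E1 E2 (c + t) - 4 * t \<le> lambda_star E1 E2 c"
    unfolding lambda_star_def[of _ _ c] using feasible_weights_nonempty[OF assms(1), where 'n = 'n]
    by (intro cInf_greatest) auto
  then show ?thesis by simp
qed

lemma weights_vanish_on_support:
  assumes "\<And>i. 0 \<le> w i" and "lambda_max (L w) = lambda1"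
  shows "w i * v $ i = 0"
proof -
  have nonneg: "\<And>k. 0 \<le> w k * (v $ k)\<^sup>2" using assms(1) by simp
  have "lambda1 * (v \<bullet> v) + (\<Sum>k\<in>UNIV. w k * (v $ k)\<^sup>2) \<le> lambda1 * (v \<bullet> v)"
    using quadratic_form_le_lambda_max[OF L_symmetric[of w], of "lift_layer1 v"] assms(2)
    by (simp add: quadratic_form_lift)
  moreover have "0 \<le> (\<Sum>k\<in>UNIV. w k * (v $ k)\<^sup>2)" by (rule sum_nonneg) (rule nonneg)
  ultimately have "(\<Sum>k\<in>UNIV. w k * (v $ k)\<^sup>2) = 0" by linarith
  then have "w i * (v $ i)\<^sup>2 = 0" using nonneg by (simp add: sum_nonneg_eq_0_iff)
  then show ?thesis by (simp add: power2_eq_square)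
qed

lemma top_eigenspace_subset_span:
  assumes "\<And>i. 0 \<le> w i" and "lambda_max (L w) = lambda1"
    and "simple_eigenvalue (L w) lambda1"
  shows "eigenspace (L w) lambda1 \<subseteq> span {lift_layer1 v}"
proof (rule card_ge_dim_independent)
  show "{lift_layer1 v} \<subseteq> eigenspace (L w) lambda1"
    using multiplex_laplacian_lift_layer1_eigenvector[OF v_eigenvector
        weights_vanish_on_support[OF assms(1,2)]]
    by (simp add: eigenspace_def)
  show "independent {lift_layer1 v}" using v_nonzero by simp
  show "dim (eigenspace (L w) lambda1) \<le> card {lift_layer1 v}"
    using assms(3) by (simp add: simple_eigenvalue_def)
qed

text \<open>Raising the weight of a vertex where \<open>v\<close> vanishes keeps the lift of \<open>v\<close> an eigenvector
  for \<open>lambda1\<close>; any eigenvalue above \<open>lambda1\<close> would have an eigenvector orthogonal to it,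
  on which the form grows by at most \<open>4 t\<close> beyond the spectral gap.\<close>
lemma lambda_max_add_nodal_weight_le:
  assumes w: "\<And>i. w i * v $ i = 0" and "v $ j = 0" and "0 \<le> t"
    and gap: "\<And>y. y \<bullet> lift_layer1 v = 0 \<Longrightarrow> y \<bullet> (L w *v y) \<le> g * (y \<bullet> y)"
    and "g + 4 * t \<le> lambda1"
  shows "lambda_max (L (w(j := w j + t))) \<le> lambda1"
proof (rule ccontr)
  let ?w = "w(j := w j + t)"
  assume "\<not> lambda_max (L ?w) \<le> lambda1"
  obtain z where z: "z \<noteq> 0" "L ?w *v z = lambda_max (L ?w) *\<^sub>R z"
    using lambda_max_eigenvector[OF L_symmetric] .
  have "\<And>i. ?w i * v $ i = 0" using w \<open>v $ j = 0\<close> by simp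
  then have "L ?w *v lift_layer1 v = lambda1 *\<^sub>R lift_layer1 v"
    by (rule multiplex_laplacian_lift_layer1_eigenvector[OF v_eigenvector])
  moreover have "lambda_max (L ?w) \<noteq> lambda1" using \<open>\<not> lambda_max (L ?w) \<le> lambda1\<close> by simp
  ultimately have "z \<bullet> lift_layer1 v = 0"
    by (rule symmetric_eigenvectors_orthogonal[OF L_symmetric z(2)])
  then have "z \<bullet> (L ?w *v z) \<le> (g + 4 * t) * (z \<bullet> z)"
    using gap multiplex_quadratic_form_add_weight[OF \<open>0 \<le> t\<close>, of z E1 E2 w j]
    unfolding distrib_right by fastforce
  also have "\<dots> \<le> lambda1 * (z \<bullet> z)"
    using \<open>g + 4 * t \<le> lambda1\<close> by (simp add: mult_right_mono)
  finally show False
    using z \<open>\<not> lambda_max (L ?w) \<le> lambda1\<close> by simp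
qed

lemma lambda_star_locally_constant:
  assumes "0 \<le> s" and "lambda_star_simple E1 E2 s" and "lambda_star E1 E2 s = lambda1"
    and "v $ j = 0"
  shows "\<exists>d>0. \<forall>t. s < t \<and> t < s + d \<longrightarrow> lambda_star E1 E2 t = lambda1"
proof -
  obtain w where w: "w \<in> feasible_weights s" "lambda_max (L w) = lambda1"
    "simple_eigenvalue (L w) lambda1"
    using assms(2,3) unfolding lambda_star_simple_def by auto
  have w_nonneg: "\<And>i. 0 \<le> w i" using w(1) by (simp add: feasible_weights_def)
  obtain g where "g < lambda1"
    and gap: "\<And>y. y \<bullet> lift_layer1 v = 0 \<Longrightarrow> y \<bullet> (L w *v y) \<le> g * (y \<bullet> y)"
    using spectral_gap[OF L_symmetric, of w "lift_layer1 v"] w(2)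
      top_eigenspace_subset_span[OF w_nonneg w(2,3)] by auto
  have "lambda_star E1 E2 t = lambda1" if "s < t" "t < s + (lambda1 - g) / 4" for t
  proof -
    have "w(j := w j + (t - s)) \<in> feasible_weights t"
      using feasible_weights_add[OF w(1), of "t - s" j] that by simp
    then have "lambda_star E1 E2 t \<le> lambda_max (L (w(j := w j + (t - s))))"
      by (rule lambda_star_le_lambda_max)
    also have "\<dots> \<le> lambda1"
    proof (rule lambda_max_add_nodal_weight_le[OF _ assms(4) _ gap])
      show "g + 4 * (t - s) \<le> lambda1" using that(2) by (simp add: field_simps)
    qed (use weights_vanish_on_support[OF w_nonneg w(2)] that(1) in auto)
    finally show ?thesis using lambda1_le_lambda_star[of t] assms(1) that by simp
  qed
  moreover have "(lambda1 - g) / 4 > 0" using \<open>g < lambda1\<close> by simp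
  ultimately show ?thesis by blast
qed

lemma lambda_star_left_limit:
  assumes "0 < s" and "\<And>u. 0 \<le> u \<Longrightarrow> u < s \<Longrightarrow> lambda_star E1 E2 u = lambda1"
  shows "lambda_star E1 E2 s = lambda1"
proof -
  have "lambda_star E1 E2 s \<le> lambda1 + e" if "e > 0" for e
  proof -
    define u where "u = max 0 (s - e / 4)"
    have "0 \<le> u" "s - e / 4 \<le> u" by (simp_all add: u_def)
    moreover have "u < s" using assms(1) that by (simp add: u_def)
    ultimately have "0 \<le> u" "u < s" "s - u \<le> e / 4" by simp_all
    then have "lambda_star E1 E2 (u + (s - u)) \<le> lambda_star E1 E2 u + 4 * (s - u)"
      by (intro lambda_star_add_le) auto
    then show ?thesis using assms(2) \<open>0 \<le> u\<close> \<open>u < s\<close> \<open>s - u \<le> e / 4\<close> by simp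
  qed
  then have "lambda_star E1 E2 s \<le> lambda1" by (rule field_le_epsilon)
  then show ?thesis using lambda1_le_lambda_star[of s] assms(1) by simp
qed

lemma lambda_star_eq_lambda1:
  assumes "\<And>c. 0 \<le> c \<Longrightarrow> c < c1 \<Longrightarrow> lambda_star_simple E1 E2 c"
    and "v $ j = 0" and "0 \<le> c" and "c < c1"
  shows "lambda_star E1 E2 c = lambda1"
proof (rule real_interval_induct[where P = "\<lambda>u. lambda_star E1 E2 u = lambda1" and a = 0 and b = c])
  show "lambda_star E1 E2 0 = lambda1" by (rule lambda_star_zero)
next
  fix s assume "0 \<le> s" "s < c" "lambda_star E1 E2 s = lambda1"
  then show "\<exists>d>0. \<forall>t. s < t \<and> t < s + d \<longrightarrow> lambda_star E1 E2 t = lambda1"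
    using lambda_star_locally_constant assms by simp
next
  fix s assume "0 < s" "\<And>u. 0 \<le> u \<Longrightarrow> u < s \<Longrightarrow> lambda_star E1 E2 u = lambda1"
  then show "lambda_star E1 E2 s = lambda1" by (rule lambda_star_left_limit)
qed (use assms(3) in simp_all)

lemma lambda1_le_emb_objective_if_optimal:
  assumes "emb_optimal E1 E2 c x \<xi>"
  shows "lambda1 \<le> emb_objective E1 E2 c x \<xi>"
proof -
  obtain k :: "'n + 'n" where True by simp
  define y where "y a = (lift_layer1 v $ a / norm v) *\<^sub>R axis k (1::real)" for a
  have norm_y: "(norm (y a - y b))\<^sup>2 = (lift_layer1 v $ a - lift_layer1 v $ b)\<^sup>2 / (norm v)\<^sup>2" for a b
  proof -
    have "y a - y b = ((lift_layer1 v $ a - lift_layer1 v $ b) / norm v) *\<^sub>R axis k 1"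
      by (simp add: y_def diff_divide_distrib scaleR_diff_left)
    then show ?thesis by (simp add: power_divide)
  qed
  have "(\<Sum>a\<in>UNIV. (norm (y a))\<^sup>2) = (\<Sum>a\<in>UNIV. (lift_layer1 v $ a)\<^sup>2) / (norm v)\<^sup>2"
    by (simp add: y_def sum_divide_distrib power_divide)
  also have "\<dots> = 1"
    using v_nonzero by (simp add: power2_norm_vec[symmetric] sum_UNIV_sum)
  finally have "emb_feasible y 0" by (simp add: emb_feasible_def)
  moreover have "emb_objective E1 E2 c y 0 = lambda1"
  proof -
    have "emb_objective E1 E2 c y 0
        = (1/2) * (\<Sum>i\<in>UNIV. \<Sum>j\<in>UNIV. if E1 i j then (v $ i - v $ j)\<^sup>2 else 0) / (norm v)\<^sup>2"
      by (simp add: emb_objective_def norm_y sum_divide_distrib if_distrib[where f = "\<lambda>u. u / _"]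
          mult.commute cong: if_cong)
    also have "\<dots> = (v \<bullet> (laplacian E1 *v v)) / (norm v)\<^sup>2"
      by (simp add: laplacian_quadratic_form[OF simple1])
    also have "\<dots> = lambda1"
      using v_nonzero by (simp add: v_eigenvector power2_norm_eq_inner)
    finally show ?thesis .
  qed
  ultimately show ?thesis using assms unfolding emb_optimal_def by metis
qed

end

theorem proposition6:
  fixes E1 E2 :: "'n::finite \<Rightarrow> 'n \<Rightarrow> bool"
    and v :: "real^'n" and c1 c :: real
    and x :: "'n + 'n \<Rightarrow> real^('n + 'n)" and \<xi> :: real
  assumes "simple_graph E1" and "simple_graph E2"
    and "lambda_max (laplacian E1) > lambda_max (laplacian E2)"
    and "simple_eigenvalue (laplacian E1) (lambda_max (laplacian E1))"
    and "v \<noteq> 0" and "laplacian E1 *v v = lambda_max (laplacian E1) *\<^sub>R v"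
    and "\<exists>i. v $ i = 0"
    and "c1 > 0"
    and "\<forall>c'. 0 \<le> c' \<and> c' < c1 \<longrightarrow> lambda_star_simple E1 E2 c'"
    and "0 \<le> c" and "c < c1"
    and "emb_optimal E1 E2 c x \<xi>"
  shows "\<exists>Q \<gamma> k. rotation_matrix Q
           \<and> (\<forall>i. Q *v x (Inl i) = (\<gamma> * v $ i) *\<^sub>R axis k 1)
           \<and> (\<forall>i. Q *v x (Inr i) = 0)"
proof -
  interpret dominant_layer E1 E2 v
    using assms(1,2,3,5,6) by unfold_locales
  obtain j where "v $ j = 0" using assms(7) by blast
  have x: "emb_feasible x \<xi>" using assms(12) by (simp add: emb_optimal_def)
  have "lambda_star E1 E2 c = lambda1"
    using lambda_star_eq_lambda1[OF _ \<open>v $ j = 0\<close> assms(10,11)] assms(9) by blast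
  then obtain w where w: "w \<in> feasible_weights c" "lambda_max (L w) = lambda1"
      "simple_eigenvalue (L w) lambda1"
    using assms(9-11) unfolding lambda_star_simple_def by auto
  have "eigenspace (L w) lambda1 \<subseteq> span {lift_layer1 v}"
    using w top_eigenspace_subset_span by (simp add: feasible_weights_def)
  moreover have "L w *v coordinate_vec x k = lambda1 *\<^sub>R coordinate_vec x k" for k
    using coordinate_vec_eigenvector_if_tight[OF simple1 simple2 w(1) x] w(2)
      lambda1_le_emb_objective_if_optimal[OF assms(12)]
    by simp
  ultimately obtain \<alpha> where \<alpha>: "\<And>a. x a = lift_layer1 v $ a *\<^sub>R \<alpha>"
    using rank_one_if_coordinate_vec_in_span[of x "lift_layer1 v"] by (auto simp: eigenspace_def)
  obtain k :: "'n + 'n" where True by simp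
  obtain Q \<gamma> where "rotation_matrix Q" and "Q *v \<alpha> = \<gamma> *\<^sub>R axis k 1"
    using rotation_to_axis[OF two_le_card_sum] by blast
  then show ?thesis
    using \<alpha> by (intro exI[of _ Q] exI[of _ \<gamma>] exI[of _ k]) (simp add: matrix_vector_mult_scaleR)
qed

end
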